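(* Let $A$ be a commutative ring with at least $4$ elements, and let $\tilde{\mathcal P}(A)=\mathrm{coker}(\delta:\mathbb Z[X_5]\to\mathbb Z[X_4])$, a right $\mathrm{GL}_2(A)$-module. Then $\mathcal{RP}(A)\cong\tilde{\mathcal P}(A)_{\mathrm{SL}_2(A)}$ as $\mathcal R_A$-modules, and $\mathcal P(A)\cong\tilde{\mathcal P}(A)_{\mathrm{GL}_2(A)}$ as abelian groups. Explicitly, the class of $(\bar{\mathbf u}_1,\ldots,\bar{\mathbf u}_4)$ corresponds to $\left\langle\frac{d(\mathbf u_1,\mathbf u_3)d(\mathbf u_1,\mathbf u_2)}{d(\mathbf u_2,\mathbf u_3)}\right\rangle\left[\frac{d(\mathbf u_1,\mathbf u_4)d(\mathbf u_2,\mathbf u_3)}{d(\mathbf u_2,\mathbf u_4)d(\mathbf u_1,\mathbf u_3)}\right]$, where $d(\mathbf u,\mathbf v)$ is the determinant of the matrix with rows $\mathbf u,\mathbf v$.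
   Context: For a commutative ring $A$: $A^\times$ units; $G_A=A^\times/(A^\times)^2$ with classes $\langle x\rangle$; $\mathcal R_A=\mathbb Z[G_A]$; $W_A=\{u\in A^\times:1-u\in A^\times\}$. $\mathcal{RP}(A)$ is the $\mathcal R_A$-module generated by $[x]$, $x\in W_A$, with relations $[x]-[y]+\langle x\rangle[y/x]-\langle x^{-1}-1\rangle\left[\frac{1-x^{-1}}{1-y^{-1}}\right]+\langle 1-x\rangle\left[\frac{1-x}{1-y}\right]=0$ for $x,y,y/x\in W_A$; $\mathcal P(A)$ is the abelian group with the same generators and relations with all $\langle\cdot\rangle$ replaced by $1$. $U_2$ is the set of unimodular rows in $A^2$; $\tilde X_n\subset U_2^n$ consists of tuples with any two rows forming an invertible matrix; $X_n=\tilde X_n/(A^\times)^n$, with $\mathrm{GL}_2(A)$ acting on the right diagonally; $\delta$ is the simplicial boundary $\delta(\bar{\mathbf u}_1,\ldots,\bar{\mathbf u}_{n+1})=\sum_i(-1)^{i+1}(\ldots,\widehat{\bar{\mathbf u}_i},\ldots)$. The coinvariants $\tilde{\mathcal P}(A)_{\mathrm{SL}_2(A)}$ are an $\mathcal R_A$-module with $\langle a\rangle$ acting via any matrix of determinant $a$. *)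

theory Defs
  imports Main "HOL-Library.Poly_Mapping"
begin

text \<open>The free abelian group Z[S] is modelled as the finitely supported
  functions 'b =>0 int whose support (keys) lies in S; generators are frag_of x,
  homomorphisms out of it are frag_extend.\<close>

definition free_ab :: "'b set \<Rightarrow> ('b \<Rightarrow>\<^sub>0 int) set" where
  "free_ab S = {z. Poly_Mapping.keys z \<subseteq> S}"

inductive_set gen_subgroup :: "('b \<Rightarrow>\<^sub>0 int) set \<Rightarrow> ('b \<Rightarrow>\<^sub>0 int) set"
  for R where
  gen_zero: "0 \<in> gen_subgroup R"
| gen_base: "r \<in> R \<Longrightarrow> r \<in> gen_subgroup R"
| gen_diff: "x \<in> gen_subgroup R \<Longrightarrow> y \<in> gen_subgroup R \<Longrightarrow> x - y \<in> gen_subgroup R"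

definition units :: "'a::comm_ring_1 set" where
  "units = {a. a dvd 1}"

definition uinv :: "'a::comm_ring_1 \<Rightarrow> 'a" where
  "uinv a = (THE b. a * b = 1)"

definition Wset :: "'a::comm_ring_1 set" where
  "Wset = {u. u dvd 1 \<and> (1 - u) dvd 1}"

text \<open>The class <a> in G_A = A^x / (A^x)^2, as a subset of A.\<close>
definition sqclass :: "'a::comm_ring_1 \<Rightarrow> 'a set" where
  "sqclass a = {a * b * b | b. b dvd 1}"

definition G_A :: "'a::comm_ring_1 set set" where
  "G_A = sqclass ` units"

definition gact :: "'a::comm_ring_1 \<Rightarrow> 'a set \<Rightarrow> 'a set" where
  "gact a g = (\<lambda>c. a * c) ` g"

text \<open>RP(A) as an abelian group is Z[G_A x W_A] modulo the R_A-submodule generated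
  by the defining relations; the generator (<g>, x) stands for <g>[x].
  The R_A-submodule generated by the relations is the subgroup generated by
  all their translates <g> * relation, g a unit.\<close>

definition rel_RP :: "'a::comm_ring_1 \<Rightarrow> 'a \<Rightarrow> 'a \<Rightarrow> (('a set \<times> 'a) \<Rightarrow>\<^sub>0 int)" where
  "rel_RP g x y =
     frag_of (sqclass g, x) - frag_of (sqclass g, y)
     + frag_of (sqclass (g * x), y * uinv x)
     - frag_of (sqclass (g * (uinv x - 1)), (1 - uinv x) * uinv (1 - uinv y))
     + frag_of (sqclass (g * (1 - x)), (1 - x) * uinv (1 - y))"

definition N_RP :: "(('a::comm_ring_1 set \<times> 'a) \<Rightarrow>\<^sub>0 int) set" where
  "N_RP = gen_subgroup {rel_RP g x y | g x y. g dvd 1 \<and> x \<in> Wset \<and> y \<in> Wset \<and> y * uinv x \<in> Wset}"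

definition rel_P :: "'a::comm_ring_1 \<Rightarrow> 'a \<Rightarrow> ('a \<Rightarrow>\<^sub>0 int)" where
  "rel_P x y =
     frag_of x - frag_of y + frag_of (y * uinv x)
     - frag_of ((1 - uinv x) * uinv (1 - uinv y))
     + frag_of ((1 - x) * uinv (1 - y))"

definition N_P :: "('a::comm_ring_1 \<Rightarrow>\<^sub>0 int) set" where
  "N_P = gen_subgroup {rel_P x y | x y. x \<in> Wset \<and> y \<in> Wset \<and> y * uinv x \<in> Wset}"

text \<open>Action of <a> on Z[G_A x W_A] (the R_A-module structure of RP(A)).\<close>
definition RP_act :: "'a::comm_ring_1 \<Rightarrow> (('a set \<times> 'a) \<Rightarrow>\<^sub>0 int) \<Rightarrow> (('a set \<times> 'a) \<Rightarrow>\<^sub>0 int)" where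
  "RP_act a = frag_extend (\<lambda>(g, x). frag_of (gact a g, x))"

type_synonym 'a row = "'a \<times> 'a"

definition d2 :: "'a::comm_ring_1 row \<Rightarrow> 'a row \<Rightarrow> 'a" where
  "d2 u v = fst u * snd v - snd u * fst v"

definition unimodular :: "'a::comm_ring_1 row \<Rightarrow> bool" where
  "unimodular u \<longleftrightarrow> (\<exists>c d. fst u * c + snd u * d = 1)"

definition rclass :: "'a::comm_ring_1 row \<Rightarrow> 'a row set" where
  "rclass u = {(t * fst u, t * snd u) | t. t dvd 1}"

text \<open>X_n = tilde X_n / (A^x)^n, as lists of row classes.\<close>
definition Xn :: "nat \<Rightarrow> 'a::comm_ring_1 row set list set" where
  "Xn n = {map rclass us | us. length us = n \<and> (\<forall>i<n. unimodular (us ! i)) \<and>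
             (\<forall>i<n. \<forall>j<n. i \<noteq> j \<longrightarrow> d2 (us ! i) (us ! j) dvd 1)}"

definition rep :: "'a row set \<Rightarrow> 'a row" where
  "rep c = (SOME u. u \<in> c)"

text \<open>Simplicial boundary delta : Z[X_{n+1}] -> Z[X_n] on a generator
  (0-based indexing: sign (-1)^i for deleting entry i).\<close>
definition bdry :: "'a row set list \<Rightarrow> ('a row set list \<Rightarrow>\<^sub>0 int)" where
  "bdry cs = (\<Sum>i<length cs. frag_cmul ((-1) ^ i) (frag_of (take i cs @ drop (Suc i) cs)))"

text \<open>2x2 matrices ((m11, m12), (m21, m22)) given by their rows.\<close>
type_synonym 'a mat2 = "'a row \<times> 'a row"

definition mdet :: "'a::comm_ring_1 mat2 \<Rightarrow> 'a" where
  "mdet M = d2 (fst M) (snd M)"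

text \<open>Right action of a matrix on a row: u |-> u M.\<close>
definition rowmul :: "'a::comm_ring_1 row \<Rightarrow> 'a mat2 \<Rightarrow> 'a row" where
  "rowmul u M = (fst u * fst (fst M) + snd u * fst (snd M),
                 fst u * snd (fst M) + snd u * snd (snd M))"

definition GL2 :: "'a::comm_ring_1 mat2 set" where
  "GL2 = {M. mdet M dvd 1}"

definition SL2 :: "'a::comm_ring_1 mat2 set" where
  "SL2 = {M. mdet M = 1}"

definition conf_act :: "'a::comm_ring_1 mat2 \<Rightarrow> ('a row set list \<Rightarrow>\<^sub>0 int) \<Rightarrow> ('a row set list \<Rightarrow>\<^sub>0 int)" where
  "conf_act M = frag_extend (\<lambda>cs. frag_of (map (\<lambda>c. (\<lambda>u. rowmul u M) ` c) cs))"

definition N_delta :: "('a::comm_ring_1 row set list \<Rightarrow>\<^sub>0 int) set" where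
  "N_delta = gen_subgroup (bdry ` Xn 5)"

text \<open>Kernel of Z[X_4] -> tilde P(A)_H for a subgroup H of GL_2(A):
  image of delta plus the span of the elements x.M - x.\<close>
definition N_coinv :: "'a::comm_ring_1 mat2 set \<Rightarrow> ('a row set list \<Rightarrow>\<^sub>0 int) set" where
  "N_coinv H = gen_subgroup (bdry ` Xn 5 \<union>
      {conf_act M (frag_of cs) - frag_of cs | M cs. M \<in> H \<and> cs \<in> Xn 4})"

definition cr_arg :: "'a::comm_ring_1 row set list \<Rightarrow> 'a" where
  "cr_arg cs = (let u = (\<lambda>i. rep (cs ! i)) in
     d2 (u 0) (u 3) * d2 (u 1) (u 2) * uinv (d2 (u 1) (u 3) * d2 (u 0) (u 2)))"

definition cls_arg :: "'a::comm_ring_1 row set list \<Rightarrow> 'a" where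
  "cls_arg cs = (let u = (\<lambda>i. rep (cs ! i)) in
     d2 (u 0) (u 2) * d2 (u 0) (u 1) * uinv (d2 (u 1) (u 2)))"

definition Phi :: "('a::comm_ring_1 row set list \<Rightarrow>\<^sub>0 int) \<Rightarrow> (('a set \<times> 'a) \<Rightarrow>\<^sub>0 int)" where
  "Phi = frag_extend (\<lambda>cs. if cs \<in> Xn 4 then frag_of (sqclass (cls_arg cs), cr_arg cs) else 0)"

definition Psi :: "('a::comm_ring_1 row set list \<Rightarrow>\<^sub>0 int) \<Rightarrow> ('a \<Rightarrow>\<^sub>0 int)" where
  "Psi = frag_extend (\<lambda>cs. if cs \<in> Xn 4 then frag_of (cr_arg cs) else 0)"

end

theory Submission
  imports Defs
begin

text \<open>
  Four rows in general position carry two invariants: the cross ratio \<open>x\<close> and the square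
  class \<open>\<langle>d13 d12 / d23\<rangle>\<close>; \<open>Phi\<close> records exactly these. A matrix of determinant 1
  moves every such configuration onto \<open>[e1, e2, e1 - a e2, e1 - a x e2]\<close> with
  \<open>a = d13 d12 / d23\<close>, and \<open>diag(s\<inverse>, s)\<close> replaces \<open>a\<close> by \<open>a s\<^sup>2\<close>, so sending
  \<open>\<langle>a\<rangle>[x]\<close> to the class of this standard configuration inverts \<open>Phi\<close> modulo the
  \<open>SL\<^sub>2\<close>-coinvariant relations. The Pluecker relation shows that the five faces of a
  configuration of five rows are sent to the five terms of the defining relation of \<open>RP(A)\<close>;
  hence \<open>Phi\<close> kills boundaries, and conversely each relator lifts to a boundary. Forgetting
  the square classes, and using \<open>diag(1, a)\<close> in \<open>GL\<^sub>2\<close>, gives the statement for \<open>P(A)\<close>.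
\<close>

lemma unit_mult_iff [simp]: "(a::'a::comm_semiring_1) * b dvd 1 \<longleftrightarrow> a dvd 1 \<and> b dvd 1"
  by (auto dest: dvd_mult_left dvd_mult_right intro: mult_dvd_mono[of a 1 b 1, simplified])

lemma uinv_right: "(a::'a::comm_ring_1) dvd 1 \<Longrightarrow> a * uinv a = 1"
  unfolding uinv_def by (rule theI') (metis dvdE mult.left_commute mult_1_right)

lemma uinv_left: "(a::'a::comm_ring_1) dvd 1 \<Longrightarrow> uinv a * a = 1"
  by (simp add: mult.commute uinv_right)

lemma uinv_unique: "(a::'a::comm_ring_1) * b = 1 \<Longrightarrow> uinv a = b"
proof -
  assume ab: "a * b = 1"
  then have "a dvd 1" by (metis dvdI)
  have "uinv a = uinv a * (a * b)" using ab by simp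
  also have "\<dots> = b" using \<open>a dvd 1\<close> by (simp add: mult.assoc[symmetric] uinv_left)
  finally show ?thesis .
qed

lemma is_unit_uinv [simp]: "(a::'a::comm_ring_1) dvd 1 \<Longrightarrow> uinv a dvd 1"
  using uinv_left by (metis dvdI)

lemma uinv_1 [simp]: "uinv (1::'a::comm_ring_1) = 1"
  by (rule uinv_unique) simp

lemma uinv_uinv [simp]: "(a::'a::comm_ring_1) dvd 1 \<Longrightarrow> uinv (uinv a) = a"
  by (rule uinv_unique) (simp add: uinv_left)

lemma uinv_mult: "(a::'a::comm_ring_1) dvd 1 \<Longrightarrow> b dvd 1 \<Longrightarrow> uinv (a * b) = uinv a * uinv b"
proof (rule uinv_unique)
  assume "a dvd 1" "b dvd 1"
  have "a * b * (uinv a * uinv b) = (a * uinv a) * (b * uinv b)" by (simp only: mult_ac)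
  then show "a * b * (uinv a * uinv b) = 1" by (simp add: \<open>a dvd 1\<close> \<open>b dvd 1\<close> uinv_right)
qed

lemma uinv_minus: "(a::'a::comm_ring_1) dvd 1 \<Longrightarrow> uinv (- a) = - uinv a"
  by (rule uinv_unique) (simp add: uinv_right)

lemma mult_mult_uinv_cancel: "(t::'a::comm_ring_1) dvd 1 \<Longrightarrow> t * (y * uinv t) = y"
  by (subst mult.left_commute) (simp add: uinv_right)

lemma mult_uinv_eq_iff: "(b::'a::comm_ring_1) dvd 1 \<Longrightarrow> a * uinv b = c \<longleftrightarrow> a = c * b"
  by (auto simp: mult.assoc uinv_left uinv_right)

lemma mult_uinv_eq_mult_uinv_iff:
  "(b::'a::comm_ring_1) dvd 1 \<Longrightarrow> d dvd 1 \<Longrightarrow> a * uinv b = c * uinv d \<longleftrightarrow> a * d = c * b"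
proof -
  assume b: "b dvd 1" and d: "d dvd 1"
  have "a * uinv b = c * uinv d \<longleftrightarrow> a = c * uinv d * b" by (rule mult_uinv_eq_iff[OF b])
  also have "\<dots> \<longleftrightarrow> c * b * uinv d = a" by (auto simp only: mult_ac)
  also have "\<dots> \<longleftrightarrow> c * b = a * d" by (rule mult_uinv_eq_iff[OF d])
  finally show ?thesis by auto
qed

lemma uinv_mult_uinv: "(a::'a::comm_ring_1) dvd 1 \<Longrightarrow> b dvd 1 \<Longrightarrow> uinv (a * uinv b) = b * uinv a"
  by (simp add: uinv_mult mult.commute)

lemma mult_uinv_mult_uinv:
  "(b::'a::comm_ring_1) dvd 1 \<Longrightarrow> d dvd 1 \<Longrightarrow> a * uinv b * (c * uinv d) = (a * c) * uinv (b * d)"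
  by (simp add: uinv_mult mult_ac)

lemma one_minus_mult_uinv: "(b::'a::comm_ring_1) dvd 1 \<Longrightarrow> 1 - a * uinv b = (b - a) * uinv b"
  by (simp add: left_diff_distrib uinv_right)

lemma mult_uinv_minus_one: "(b::'a::comm_ring_1) dvd 1 \<Longrightarrow> a * uinv b - 1 = (a - b) * uinv b"
  by (simp add: left_diff_distrib uinv_right)

lemma sqclass_mult_square: "(s::'a::comm_ring_1) dvd 1 \<Longrightarrow> sqclass (a * s * s) = sqclass a"
  unfolding sqclass_def
proof (intro set_eqI iffI; elim CollectE exE conjE)
  fix z b assume "s dvd 1" "b dvd 1" "z = a * s * s * b * b"
  then show "z \<in> {a * b * b |b. b dvd 1}"
    by (intro CollectI exI[of _ "s * b"]) (simp add: mult_ac)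
next
  fix z b assume s: "s dvd 1" and "b dvd 1" "z = a * b * b"
  moreover have "a * s * s * (b * uinv s) * (b * uinv s) = a * b * b * (s * uinv s) * (s * uinv s)"
    by (simp add: mult_ac)
  then have "a * b * b = a * s * s * (b * uinv s) * (b * uinv s)"
    by (simp add: uinv_right[OF s])
  ultimately show "z \<in> {a * s * s * b * b |b. b dvd 1}"
    by (intro CollectI exI[of _ "b * uinv s"]) simp
qed

lemma sqclass_eqD: "sqclass a = sqclass c \<Longrightarrow> \<exists>s. s dvd 1 \<and> c = a * s * (s::'a::comm_ring_1)"
proof -
  assume "sqclass a = sqclass c"
  moreover have "c \<in> sqclass c" unfolding sqclass_def by (intro CollectI exI[of _ 1]) simp
  ultimately show ?thesis unfolding sqclass_def by auto
qed

definition sqrep :: "'a::comm_ring_1 set \<Rightarrow> 'a" where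
  "sqrep g = (SOME a. a dvd 1 \<and> g = sqclass a)"

lemma sqrep_sqclass:
  assumes "(c::'a::comm_ring_1) dvd 1"
  shows "sqrep (sqclass c) dvd 1" "sqclass (sqrep (sqclass c)) = sqclass c"
proof -
  have "sqrep (sqclass c) dvd 1 \<and> sqclass c = sqclass (sqrep (sqclass c))"
    unfolding sqrep_def by (rule someI_ex) (use assms in blast)
  then show "sqrep (sqclass c) dvd 1" "sqclass (sqrep (sqclass c)) = sqclass c" by simp_all
qed

lemma gact_sqclass: "gact a (sqclass c) = sqclass (a * c)"
  unfolding gact_def sqclass_def by (auto simp: mult.assoc)

lemma mem_G_A: "g \<in> G_A \<longleftrightarrow> (\<exists>c. c dvd 1 \<and> g = sqclass (c::'a::comm_ring_1))"
  by (auto simp: G_A_def units_def)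

section \<open>Free abelian groups\<close>

lemma gen_subgroup_add: "x \<in> gen_subgroup R \<Longrightarrow> y \<in> gen_subgroup R \<Longrightarrow> x + y \<in> gen_subgroup R"
  using gen_diff[OF _ gen_diff[OF gen_zero]] by fastforce

lemma gen_subgroup_mono: "R \<subseteq> S \<Longrightarrow> gen_subgroup R \<subseteq> gen_subgroup S"
proof
  fix z assume "R \<subseteq> S" "z \<in> gen_subgroup R"
  from \<open>z \<in> gen_subgroup R\<close> show "z \<in> gen_subgroup S"
    by induction (use \<open>R \<subseteq> S\<close> in \<open>auto intro: gen_subgroup.intros\<close>)
qed

lemma additive_image_gen_subgroup:
  fixes F :: "('a \<Rightarrow>\<^sub>0 int) \<Rightarrow> ('b \<Rightarrow>\<^sub>0 int)"
  assumes F: "\<And>a b. F (a - b) = F a - F b" and "F ` R \<subseteq> gen_subgroup S"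
  shows "F ` gen_subgroup R \<subseteq> gen_subgroup S"
proof clarify
  fix z assume "z \<in> gen_subgroup R"
  then show "F z \<in> gen_subgroup S"
  proof induction
    case gen_zero
    have "F 0 = 0" using F[of 0 0] by simp
    then show ?case by (simp add: gen_subgroup.gen_zero)
  qed (use assms(2) in \<open>auto simp: F intro: gen_diff\<close>)
qed

lemma frag_of_in_free_ab: "x \<in> S \<Longrightarrow> frag_of x \<in> free_ab S"
  by (simp add: free_ab_def)

lemma diff_in_free_ab: "a \<in> free_ab S \<Longrightarrow> b \<in> free_ab S \<Longrightarrow> a - b \<in> free_ab S"
  unfolding free_ab_def using keys_diff by fastforce

lemma add_in_free_ab: "a \<in> free_ab S \<Longrightarrow> b \<in> free_ab S \<Longrightarrow> a + b \<in> free_ab S"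
  unfolding free_ab_def using keys_add by fastforce

lemma frag_extend_in_free_ab:
  assumes "z \<in> free_ab S" and "\<And>x. x \<in> S \<Longrightarrow> f x \<in> free_ab T"
  shows "frag_extend f z \<in> free_ab T"
  using assms keys_frag_extend[of f z] unfolding free_ab_def by blast

lemma additive_eq_on_free_ab:
  fixes F G :: "('a \<Rightarrow>\<^sub>0 int) \<Rightarrow> 'b::ab_group_add"
  assumes "z \<in> free_ab S" and "\<And>a b. F (a - b) = F a - F b" "\<And>a b. G (a - b) = G a - G b"
    and "\<And>x. x \<in> S \<Longrightarrow> F (frag_of x) = G (frag_of x)"
  shows "F z = G z"
proof -
  have "Poly_Mapping.keys z \<subseteq> S" using assms(1) by (simp add: free_ab_def)
  then show ?thesis
  proof (induction z rule: frag_induction)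
    case zero show ?case using assms(2)[of 0 0] assms(3)[of 0 0] by simp
  qed (simp_all add: assms(2-4))
qed

lemma diff_frag_extend_frag_extend_in_gen_subgroup:
  assumes "z \<in> free_ab S"
    and "\<And>x. x \<in> S \<Longrightarrow> frag_of x - frag_extend g (f x) \<in> gen_subgroup R"
  shows "z - frag_extend g (frag_extend f z) \<in> gen_subgroup R"
proof -
  have "Poly_Mapping.keys z \<subseteq> S" using assms(1) by (simp add: free_ab_def)
  then show ?thesis
  proof (induction z rule: frag_induction)
    case (diff a b)
    have "a - b - frag_extend g (frag_extend f (a - b))
        = (a - frag_extend g (frag_extend f a)) - (b - frag_extend g (frag_extend f b))"
      by (simp add: frag_extend_diff)
    with diff show ?case by (metis gen_diff)
  qed (simp_all add: gen_zero assms(2))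
qed

definition row_scale :: "'a::comm_ring_1 \<Rightarrow> 'a row \<Rightarrow> 'a row" where
  "row_scale t u = (t * fst u, t * snd u)"

lemma d2_row_scale_left: "d2 (row_scale t u) v = t * d2 u v"
  unfolding d2_def row_scale_def by (simp add: algebra_simps)

lemma d2_row_scale_right: "d2 u (row_scale t v) = t * d2 u v"
  unfolding d2_def row_scale_def by (simp add: algebra_simps)

lemma d2_rowmul: "d2 (rowmul u M) (rowmul v M) = mdet M * d2 u (v::'a::comm_ring_1 row)"
  unfolding d2_def rowmul_def mdet_def by (simp add: algebra_simps)

lemma d2_rowmul_1: "d2 (rowmul (1, c) (v0, v1)) w = d2 v0 w + c * d2 v1 (w::'a::comm_ring_1 row)"
  by (simp add: rowmul_def d2_def algebra_simps)

lemma d2_self [simp]: "d2 u (u::'a::comm_ring_1 row) = 0"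
  by (simp add: d2_def mult.commute)

lemma d2_swap: "d2 v u = - d2 u (v::'a::comm_ring_1 row)"
  unfolding d2_def by (simp add: algebra_simps)

lemma is_unit_d2_swap: "d2 v u dvd 1 \<longleftrightarrow> d2 u (v::'a::comm_ring_1 row) dvd 1"
  by (subst d2_swap) simp

lemma d2_plucker: "d2 a c * d2 b d - d2 a d * d2 b c = d2 a b * d2 c (d::'a::comm_ring_1 row)"
  unfolding d2_def by (simp add: algebra_simps)

lemma unimodular_if_is_unit_d2: "d2 u v dvd 1 \<Longrightarrow> unimodular (u::'a::comm_ring_1 row)"
  unfolding unimodular_def
proof (intro exI)
  assume "d2 u v dvd 1"
  then show "fst u * (snd v * uinv (d2 u v)) + snd u * (- fst v * uinv (d2 u v)) = 1"
    using uinv_right[of "d2 u v"] unfolding d2_def by (simp add: algebra_simps)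
qed

lemma rclass_eq_image: "rclass u = (\<lambda>t. row_scale t u) ` {t. t dvd 1}"
  unfolding rclass_def row_scale_def by auto

lemma row_scale_row_scale: "row_scale r (row_scale t u) = row_scale (r * t) u"
  by (simp add: row_scale_def mult.assoc)

lemma mem_rclass: "v \<in> rclass u \<longleftrightarrow> (\<exists>t. t dvd 1 \<and> v = row_scale t u)"
  unfolding rclass_def row_scale_def by auto

lemma rclass_row_scale: "(t::'a::comm_ring_1) dvd 1 \<Longrightarrow> rclass (row_scale t u) = rclass u"
proof (intro set_eqI iffI; unfold mem_rclass; elim exE conjE)
  fix v r assume "t dvd 1" "r dvd 1" "v = row_scale r (row_scale t u)"
  then show "\<exists>s. s dvd 1 \<and> v = row_scale s u"
    by (intro exI[of _ "r * t"]) (simp add: row_scale_row_scale)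
next
  fix v r assume t: "t dvd 1" and "r dvd 1" "v = row_scale r u"
  moreover have "row_scale r u = row_scale (r * uinv t) (row_scale t u)"
    using t by (simp add: row_scale_row_scale mult.assoc uinv_left)
  ultimately show "\<exists>s. s dvd 1 \<and> v = row_scale s (row_scale t u)"
    by (intro exI[of _ "r * uinv t"]) simp
qed

text \<open>Cramer's rule \<open>d2 w z * v = d2 v z * w + d2 w v * z\<close>: if \<open>d2 v w = 0\<close>, then \<open>v\<close>
  is a unit multiple of \<open>w\<close>.\<close>

lemma rclass_eq_if_d2_eq_0:
  assumes "d2 v w = 0" "d2 v z dvd 1" "d2 w z dvd 1"
  shows "rclass v = rclass (w::'a::comm_ring_1 row)"
proof -
  have "d2 w z * fst v - d2 v z * fst w = d2 w v * fst z"
    "d2 w z * snd v - d2 v z * snd w = d2 w v * snd z"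
    by (simp_all add: d2_def algebra_simps)
  moreover have "d2 w v = 0" using assms(1) by (simp add: d2_swap[of w])
  ultimately have "d2 v z * fst w = fst v * d2 w z" "d2 v z * snd w = snd v * d2 w z"
    by (simp_all add: algebra_simps)
  then have "d2 v z * fst w * uinv (d2 w z) = fst v" "d2 v z * snd w * uinv (d2 w z) = snd v"
    using assms(3) by (simp_all add: mult_uinv_eq_iff)
  then have v: "v = row_scale (d2 v z * uinv (d2 w z)) w"
    by (simp add: row_scale_def prod_eq_iff mult_ac)
  show ?thesis using assms(2,3) by (subst v) (simp add: rclass_row_scale)
qed

lemma rep_rclass: obtains t where "(t::'a::comm_ring_1) dvd 1" "rep (rclass u) = row_scale t u"
proof -
  have "u \<in> rclass u" unfolding mem_rclass by (intro exI[of _ 1]) (simp add: row_scale_def)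
  then have "rep (rclass u) \<in> rclass u" unfolding rep_def by (rule someI)
  then show ?thesis using that unfolding mem_rclass by blast
qed

lemma image_rowmul_rclass: "(\<lambda>u. rowmul u M) ` rclass u = rclass (rowmul u M)"
  unfolding rclass_eq_image image_image by (simp add: rowmul_def row_scale_def algebra_simps)

definition in_general_position :: "'a::comm_ring_1 row list \<Rightarrow> bool" where
  "in_general_position us \<longleftrightarrow>
     (\<forall>i<length us. \<forall>j<length us. i \<noteq> j \<longrightarrow> d2 (us ! i) (us ! j) dvd 1)"

lemma in_general_position_Nil: "in_general_position []"
  by (simp add: in_general_position_def)

lemma in_general_position_Cons:
  "in_general_position (u # us) \<longleftrightarrow> (\<forall>v \<in> set us. d2 u v dvd 1) \<and> in_general_position us"
  unfolding in_general_position_def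
  by (simp add: All_less_Suc2 all_set_conv_all_nth is_unit_d2_swap) blast

lemma in_general_position4:
  "in_general_position [u0, u1, u2, u3] \<longleftrightarrow>
     d2 u0 u1 dvd 1 \<and> d2 u0 u2 dvd 1 \<and> d2 u0 u3 dvd 1 \<and> d2 u1 u2 dvd 1 \<and> d2 u1 u3 dvd 1 \<and>
     d2 u2 (u3::'a::comm_ring_1 row) dvd 1"
  by (simp add: in_general_position_Cons in_general_position_Nil)

lemma in_general_position5:
  "in_general_position [u0, u1, u2, u3, u4] \<longleftrightarrow>
     d2 u0 u1 dvd 1 \<and> d2 u0 u2 dvd 1 \<and> d2 u0 u3 dvd 1 \<and> d2 u0 u4 dvd 1 \<and>
     d2 u1 u2 dvd 1 \<and> d2 u1 u3 dvd 1 \<and> d2 u1 u4 dvd 1 \<and>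
     d2 u2 u3 dvd 1 \<and> d2 u2 u4 dvd 1 \<and> d2 u3 (u4::'a::comm_ring_1 row) dvd 1"
  by (simp add: in_general_position_Cons in_general_position_Nil)

lemma in_general_position_faces:
  assumes "in_general_position [u0, u1, u2, u3, u4::'a::comm_ring_1 row]"
  shows "in_general_position [u1, u2, u3, u4]" "in_general_position [u0, u2, u3, u4]"
    "in_general_position [u0, u1, u3, u4]" "in_general_position [u0, u1, u2, u4]"
    "in_general_position [u0, u1, u2, u3]"
  using assms by (simp_all add: in_general_position4 in_general_position5)

text \<open>Unimodularity of the rows, required in \<open>Xn\<close>, follows from general position once there
  are two rows.\<close>

lemma Xn_iff:
  assumes "2 \<le> n"
  shows "cs \<in> Xn n \<longleftrightarrow>
    (\<exists>us. cs = map rclass us \<and> length us = n \<and> in_general_position (us::'a::comm_ring_1 row list))"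
proof -
  have "unimodular (us ! i)" if "in_general_position us" "length us = n" "i < n" for us :: "'a row list" and i
  proof -
    define j where "j = (if i = 0 then 1 else 0::nat)"
    have "j < n" "i \<noteq> j" using assms \<open>i < n\<close> by (auto simp: j_def)
    then show ?thesis
      using that by (auto simp: in_general_position_def intro: unimodular_if_is_unit_d2)
  qed
  then show ?thesis unfolding Xn_def in_general_position_def by blast
qed

lemma length_eq_4_conv: "length us = 4 \<longleftrightarrow> (\<exists>u0 u1 u2 u3. us = [u0, u1, u2, u3])"
  by (auto simp: numeral_eq_Suc length_Suc_conv)

lemma length_eq_5_conv: "length us = 5 \<longleftrightarrow> (\<exists>u0 u1 u2 u3 u4. us = [u0, u1, u2, u3, u4])"
  by (auto simp: numeral_eq_Suc length_Suc_conv)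

lemma Xn4_iff:
  "cs \<in> Xn 4 \<longleftrightarrow> (\<exists>u0 u1 u2 u3. cs = map rclass [u0, u1, u2, u3] \<and>
      in_general_position [u0, u1, u2, u3::'a::comm_ring_1 row])"
  unfolding Xn_iff[of 4, simplified] length_eq_4_conv by blast

lemma Xn5_iff:
  "cs \<in> Xn 5 \<longleftrightarrow> (\<exists>u0 u1 u2 u3 u4. cs = map rclass [u0, u1, u2, u3, u4] \<and>
      in_general_position [u0, u1, u2, u3, u4::'a::comm_ring_1 row])"
  unfolding Xn_iff[of 5, simplified] length_eq_5_conv by blast

lemma map_rclass_in_Xn4:
  "in_general_position [u0, u1, u2, u3::'a::comm_ring_1 row] \<Longrightarrow> map rclass [u0, u1, u2, u3] \<in> Xn 4"
  unfolding Xn4_iff by blast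

lemma map_rclass_in_Xn5:
  "in_general_position [u0, u1, u2, u3, u4::'a::comm_ring_1 row] \<Longrightarrow> map rclass [u0, u1, u2, u3, u4] \<in> Xn 5"
  unfolding Xn5_iff by blast

section \<open>Cross ratios\<close>

text \<open>\<open>cr_arg\<close> and \<open>cls_arg\<close> evaluated on given representative rows (indices are 0-based).\<close>

definition cr_rows :: "'a::comm_ring_1 row \<Rightarrow> 'a row \<Rightarrow> 'a row \<Rightarrow> 'a row \<Rightarrow> 'a" where
  "cr_rows u0 u1 u2 u3 = d2 u0 u3 * d2 u1 u2 * uinv (d2 u1 u3 * d2 u0 u2)"

definition cls_rows :: "'a::comm_ring_1 row \<Rightarrow> 'a row \<Rightarrow> 'a row \<Rightarrow> 'a" where
  "cls_rows u0 u1 u2 = d2 u0 u2 * d2 u0 u1 * uinv (d2 u1 u2)"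

lemma cr_rows_row_scale:
  assumes "t0 dvd 1" "t1 dvd 1" "t2 dvd 1" "t3 dvd 1" "d2 u1 u3 dvd 1" "d2 u0 u2 dvd 1"
  shows "cr_rows (row_scale t0 u0) (row_scale t1 u1) (row_scale t2 u2) (row_scale t3 u3) =
    cr_rows u0 u1 u2 (u3::'a::comm_ring_1 row)"
  using assms by (simp add: cr_rows_def d2_row_scale_left d2_row_scale_right mult_uinv_eq_mult_uinv_iff)

lemma cls_rows_row_scale:
  assumes "t1 dvd 1" "t2 dvd 1" "d2 u1 u2 dvd 1"
  shows "cls_rows (row_scale t0 u0) (row_scale t1 u1) (row_scale t2 u2) =
    cls_rows u0 u1 (u2::'a::comm_ring_1 row) * t0 * t0"
proof -
  have rhs: "cls_rows u0 u1 u2 * t0 * t0 = (d2 u0 u2 * d2 u0 u1 * t0 * t0) * uinv (d2 u1 u2)"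
    by (simp add: cls_rows_def mult_ac)
  show ?thesis
    unfolding rhs unfolding cls_rows_def d2_row_scale_left d2_row_scale_right using assms
    by (simp add: mult_uinv_eq_mult_uinv_iff)
qed

lemma cr_rows_rowmul:
  assumes "mdet M dvd 1" "d2 u1 u3 dvd 1" "d2 u0 u2 dvd 1"
  shows "cr_rows (rowmul u0 M) (rowmul u1 M) (rowmul u2 M) (rowmul u3 M) =
    cr_rows u0 u1 u2 (u3::'a::comm_ring_1 row)"
  using assms by (simp add: cr_rows_def d2_rowmul mult_uinv_eq_mult_uinv_iff)

lemma cls_rows_rowmul:
  assumes "mdet M dvd 1" "d2 u1 u2 dvd 1"
  shows "cls_rows (rowmul u0 M) (rowmul u1 M) (rowmul u2 M) = mdet M * cls_rows u0 u1 (u2::'a::comm_ring_1 row)"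
  using assms
  by (simp add: cls_rows_def d2_rowmul mult.assoc[symmetric] mult_uinv_eq_mult_uinv_iff)

lemma cls_rows_mult_cr_rows:
  assumes "d2 u0 u1 dvd 1" "d2 u0 u2 dvd 1" "d2 u1 u2 dvd 1" "d2 u1 u3 dvd 1"
  shows "cls_rows u0 u1 u2 * cr_rows u0 u1 u2 u3 = cls_rows u0 u1 (u3::'a::comm_ring_1 row)"
  using assms by (simp add: cls_rows_def cr_rows_def mult_uinv_mult_uinv mult_uinv_eq_mult_uinv_iff)

lemma one_minus_cr_rows:
  assumes "d2 u1 u3 dvd 1" "d2 u0 u2 dvd 1"
  shows "1 - cr_rows u0 u1 u2 u3 = d2 u0 u1 * d2 u2 u3 * uinv (d2 u1 u3 * d2 (u0::'a::comm_ring_1 row) u2)"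
proof -
  have "d2 u1 u3 * d2 u0 u2 - d2 u0 u3 * d2 u1 u2 = d2 u0 u1 * d2 u2 u3"
    using d2_plucker[of u0 u2 u1 u3] by (simp add: mult_ac)
  then show ?thesis using assms by (simp add: cr_rows_def one_minus_mult_uinv)
qed

lemma uinv_cr_rows:
  assumes "d2 u0 u3 dvd 1" "d2 u1 u2 dvd 1" "d2 u1 u3 dvd 1" "d2 u0 u2 dvd 1"
  shows "uinv (cr_rows u0 u1 u2 u3) = d2 u1 u3 * d2 u0 u2 * uinv (d2 u0 u3 * d2 u1 (u2::'a::comm_ring_1 row))"
  using assms by (simp add: cr_rows_def uinv_mult_uinv)

lemma uinv_cr_rows_minus_one:
  assumes "d2 u0 u3 dvd 1" "d2 u1 u2 dvd 1" "d2 u1 u3 dvd 1" "d2 u0 u2 dvd 1"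
  shows "uinv (cr_rows u0 u1 u2 u3) - 1 = d2 u0 u1 * d2 u2 u3 * uinv (d2 u0 u3 * d2 u1 (u2::'a::comm_ring_1 row))"
proof -
  have "d2 u1 u3 * d2 u0 u2 - d2 u0 u3 * d2 u1 u2 = d2 u0 u1 * d2 u2 u3"
    using d2_plucker[of u0 u2 u1 u3] by (simp add: mult_ac)
  then show ?thesis using assms by (simp add: uinv_cr_rows mult_uinv_minus_one)
qed

lemma cr_rows_in_Wset:
  assumes "in_general_position [u0, u1, u2, u3::'a::comm_ring_1 row]"
  shows "cr_rows u0 u1 u2 u3 \<in> Wset"
  using assms by (simp add: Wset_def in_general_position4 one_minus_cr_rows) (simp add: cr_rows_def)

text \<open>The invariants of the five faces of \<open>[u0, ..., u4]\<close> in terms of \<open>g\<close>, \<open>x\<close>, \<open>y\<close>: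
  they are exactly the five terms of \<open>rel_RP g x y\<close>.\<close>

lemma cr_rows_five_term:
  assumes "in_general_position [u0, u1, u2, u3, u4::'a::comm_ring_1 row]"
  defines "x \<equiv> cr_rows u0 u1 u2 u3" and "y \<equiv> cr_rows u0 u1 u2 u4" and "g \<equiv> cls_rows u0 u1 u2"
  shows "cls_rows u0 u1 u3 = g * x"
    and "cr_rows u0 u1 u3 u4 = y * uinv x"
    and "sqclass (cls_rows u0 u2 u3) = sqclass (g * (uinv x - 1))"
    and "cr_rows u0 u2 u3 u4 = (1 - uinv x) * uinv (1 - uinv y)"
    and "sqclass (cls_rows u1 u2 u3) = sqclass (g * (1 - x))"
    and "cr_rows u1 u2 u3 u4 = (1 - x) * uinv (1 - y)"
proof -
  have u: "d2 u0 u1 dvd 1" "d2 u0 u2 dvd 1" "d2 u0 u3 dvd 1" "d2 u0 u4 dvd 1" "d2 u1 u2 dvd 1"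
    "d2 u1 u3 dvd 1" "d2 u1 u4 dvd 1" "d2 u2 u3 dvd 1" "d2 u2 u4 dvd 1" "d2 u3 u4 dvd 1"
    using assms(1) by (simp_all add: in_general_position5)
  note frac = mult_uinv_mult_uinv uinv_mult_uinv mult_uinv_eq_mult_uinv_iff
  have "1 - uinv x = - (uinv x - 1)" "1 - uinv y = - (uinv y - 1)" by simp_all
  then have minus_uinv:
    "1 - uinv x = - (d2 u0 u1 * d2 u2 u3 * uinv (d2 u0 u3 * d2 u1 u2))"
    "1 - uinv y = - (d2 u0 u1 * d2 u2 u4 * uinv (d2 u0 u4 * d2 u1 u2))"
    using u by (simp_all add: x_def y_def uinv_cr_rows_minus_one)
  show "cls_rows u0 u1 u3 = g * x"
    using u by (simp add: g_def x_def cls_rows_mult_cr_rows)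
  show "cr_rows u0 u1 u3 u4 = y * uinv x"
    using u by (simp add: x_def y_def uinv_cr_rows) (simp add: u cr_rows_def frac)
  show "cr_rows u0 u2 u3 u4 = (1 - uinv x) * uinv (1 - uinv y)"
    using u by (simp add: minus_uinv uinv_minus uinv_mult_uinv) (simp add: u cr_rows_def frac)
  show "cr_rows u1 u2 u3 u4 = (1 - x) * uinv (1 - y)"
    using u by (simp add: x_def y_def one_minus_cr_rows uinv_mult_uinv) (simp add: u cr_rows_def frac)
  define s where "s = uinv x - 1"
  have s: "s dvd 1" "g = cls_rows u0 u2 u3 * s"
    using u by (simp_all add: s_def x_def g_def uinv_cr_rows_minus_one cls_rows_def frac)
  then show "sqclass (cls_rows u0 u2 u3) = sqclass (g * (uinv x - 1))"
    by (simp add: s_def[symmetric] sqclass_mult_square)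
  define t where "t = d2 u0 u1 * d2 u2 u3 * uinv (d2 u1 u3 * d2 u1 u2)"
  have t: "t dvd 1" "g * (1 - x) = cls_rows u1 u2 u3 * t * t"
    using u by (simp_all add: t_def x_def g_def one_minus_cr_rows cls_rows_def frac)
  then show "sqclass (cls_rows u1 u2 u3) = sqclass (g * (1 - x))"
    by (simp add: sqclass_mult_square)
qed

lemma Phi_diff: "Phi (a - b) = Phi a - Phi b"
  by (simp add: Phi_def frag_extend_diff)

lemma Psi_diff: "Psi (a - b) = Psi a - Psi b"
  by (simp add: Psi_def frag_extend_diff)

lemma conf_act_diff: "conf_act M (a - b) = conf_act M a - conf_act M b"
  by (simp add: conf_act_def frag_extend_diff)

lemma RP_act_diff: "RP_act c (a - b) = RP_act c a - RP_act c b"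
  by (simp add: RP_act_def frag_extend_diff)

lemma RP_act_1: "RP_act 1 w = w"
  unfolding RP_act_def gact_def by (simp add: case_prod_eta[of frag_of] flip: frag_expansion)

lemma Phi_Psi_map_rclass:
  assumes "in_general_position [u0, u1, u2, u3::'a::comm_ring_1 row]"
  shows "Phi (frag_of (map rclass [u0, u1, u2, u3])) = frag_of (sqclass (cls_rows u0 u1 u2), cr_rows u0 u1 u2 u3)"
    and "Psi (frag_of (map rclass [u0, u1, u2, u3])) = frag_of (cr_rows u0 u1 u2 u3)"
proof -
  obtain t0 where t0: "t0 dvd 1" "rep (rclass u0) = row_scale t0 u0" by (rule rep_rclass)
  obtain t1 where t1: "t1 dvd 1" "rep (rclass u1) = row_scale t1 u1" by (rule rep_rclass)
  obtain t2 where t2: "t2 dvd 1" "rep (rclass u2) = row_scale t2 u2" by (rule rep_rclass)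
  obtain t3 where t3: "t3 dvd 1" "rep (rclass u3) = row_scale t3 u3" by (rule rep_rclass)
  note u = assms[unfolded in_general_position4]
  have "cr_arg (map rclass [u0, u1, u2, u3]) = cr_rows u0 u1 u2 u3"
    using t0 t1 t2 t3 u by (simp add: cr_arg_def cr_rows_def[symmetric] cr_rows_row_scale)
  moreover have "sqclass (cls_arg (map rclass [u0, u1, u2, u3])) = sqclass (cls_rows u0 u1 u2)"
    using t0 t1 t2 t3 u
    by (simp add: cls_arg_def cls_rows_def[symmetric] cls_rows_row_scale sqclass_mult_square)
  ultimately show "Phi (frag_of (map rclass [u0, u1, u2, u3])) = frag_of (sqclass (cls_rows u0 u1 u2), cr_rows u0 u1 u2 u3)"
    and "Psi (frag_of (map rclass [u0, u1, u2, u3])) = frag_of (cr_rows u0 u1 u2 u3)"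
    using map_rclass_in_Xn4[OF assms] by (simp_all add: Phi_def Psi_def del: list.map)
qed

lemma bdry_map_rclass:
  "bdry (map rclass [u0, u1, u2, u3, u4]) =
     frag_of (map rclass [u1, u2, u3, u4]) - frag_of (map rclass [u0, u2, u3, u4])
   + frag_of (map rclass [u0, u1, u3, u4]) - frag_of (map rclass [u0, u1, u2, u4])
   + frag_of (map rclass [u0, u1, u2, u3])"
  by (simp add: bdry_def eval_nat_numeral)

lemma Phi_bdry:
  assumes "in_general_position [u0, u1, u2, u3, u4::'a::comm_ring_1 row]"
  shows "Phi (bdry (map rclass [u0, u1, u2, u3, u4])) =
    rel_RP (cls_rows u0 u1 u2) (cr_rows u0 u1 u2 u3) (cr_rows u0 u1 u2 u4)"
  unfolding bdry_map_rclass Phi_def frag_extend_add frag_extend_diff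
  unfolding Phi_def[symmetric] in_general_position_faces[OF assms, THEN Phi_Psi_map_rclass(1)]
  unfolding rel_RP_def cr_rows_five_term(1,2,4,6)[OF assms] cr_rows_five_term(3,5)[OF assms, symmetric]
  by (simp add: algebra_simps)

lemma Psi_bdry:
  assumes "in_general_position [u0, u1, u2, u3, u4::'a::comm_ring_1 row]"
  shows "Psi (bdry (map rclass [u0, u1, u2, u3, u4])) = rel_P (cr_rows u0 u1 u2 u3) (cr_rows u0 u1 u2 u4)"
  unfolding bdry_map_rclass Psi_def frag_extend_add frag_extend_diff
  unfolding Psi_def[symmetric] in_general_position_faces[OF assms, THEN Phi_Psi_map_rclass(2)]
  unfolding rel_P_def cr_rows_five_term(1,2,4,6)[OF assms]
  by (simp add: algebra_simps)

lemma rel_parameters_bdry: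
  assumes "in_general_position [u0, u1, u2, u3, u4::'a::comm_ring_1 row]"
  shows "cls_rows u0 u1 u2 dvd 1" "cr_rows u0 u1 u2 u3 \<in> Wset" "cr_rows u0 u1 u2 u4 \<in> Wset"
    "cr_rows u0 u1 u2 u4 * uinv (cr_rows u0 u1 u2 u3) \<in> Wset"
  using assms in_general_position_faces[OF assms, THEN cr_rows_in_Wset]
  by (simp_all add: in_general_position5 cls_rows_def cr_rows_five_term(2)[OF assms, symmetric])

lemma conf_act_map_rclass:
  "conf_act M (frag_of (map rclass us)) = frag_of (map rclass (map (\<lambda>u. rowmul u M) us))"
  unfolding conf_act_def by (simp add: image_rowmul_rclass comp_def)

lemma Phi_Psi_conf_act:
  assumes M: "mdet M dvd 1" and cs: "cs \<in> Xn 4"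
  shows "Phi (conf_act M (frag_of cs)) = RP_act (mdet M) (Phi (frag_of (cs::'a::comm_ring_1 row set list)))"
    and "Psi (conf_act M (frag_of cs)) = Psi (frag_of cs)"
proof -
  obtain u0 u1 u2 u3 where cs: "cs = map rclass [u0, u1, u2, u3]"
    and u: "in_general_position [u0, u1, u2, u3::'a row]"
    using cs unfolding Xn4_iff by blast
  have uM: "in_general_position [rowmul u0 M, rowmul u1 M, rowmul u2 M, rowmul u3 M]"
    using u M by (simp add: in_general_position4 d2_rowmul)
  have act: "conf_act M (frag_of cs) = frag_of (map rclass [rowmul u0 M, rowmul u1 M, rowmul u2 M, rowmul u3 M])"
    unfolding cs conf_act_map_rclass by simp
  show "Phi (conf_act M (frag_of cs)) = RP_act (mdet M) (Phi (frag_of cs))"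
    and "Psi (conf_act M (frag_of cs)) = Psi (frag_of cs)"
    unfolding act unfolding cs Phi_Psi_map_rclass[OF uM] Phi_Psi_map_rclass[OF u]
    using u M by (simp_all add: RP_act_def gact_sqclass cr_rows_rowmul cls_rows_rowmul in_general_position4)
qed

lemma Phi_conf_act:
  assumes "M \<in> GL2" "z \<in> free_ab (Xn 4 :: 'a::comm_ring_1 row set list set)"
  shows "Phi (conf_act M z) = RP_act (mdet M) (Phi z)"
  using assms(2)
  by (rule additive_eq_on_free_ab[where F = "\<lambda>z. Phi (conf_act M z)" and G = "\<lambda>z. RP_act (mdet M) (Phi z)"])
    (use assms(1) in \<open>simp_all add: Phi_diff conf_act_diff RP_act_diff GL2_def Phi_Psi_conf_act(1)\<close>)

section \<open>Standard configurations\<close>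

definition std_rows :: "'a::comm_ring_1 \<Rightarrow> 'a \<Rightarrow> 'a row list" where
  "std_rows a x = [(1, 0), (0, 1), (1, - a), (1, - (a * x))]"

lemma in_general_position_std_rows:
  "a dvd 1 \<Longrightarrow> x \<in> Wset \<Longrightarrow> in_general_position (std_rows a (x::'a::comm_ring_1))"
proof -
  assume "a dvd 1" "x \<in> Wset"
  moreover have "- (a * x) - - a = a * (1 - x)" by (simp add: algebra_simps)
  ultimately show ?thesis by (simp add: std_rows_def in_general_position4 d2_def Wset_def)
qed

lemma in_general_position_std_rows5:
  assumes "g dvd 1" "x \<in> Wset" "y \<in> Wset" "y * uinv x \<in> Wset"
  shows "in_general_position [(1, 0), (0, 1), (1, - g), (1, - (g * x)), (1, - (g * (y::'a::comm_ring_1)))]"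
proof -
  have "x dvd 1" using assms(2) by (simp add: Wset_def)
  then have "- (g * y) - - (g * x) = g * x * (1 - y * uinv x)"
    by (simp add: right_diff_distrib mult.assoc mult_mult_uinv_cancel)
  moreover have "- (g * x) - - g = g * (1 - x)" "- (g * y) - - g = g * (1 - y)"
    by (simp_all add: algebra_simps)
  ultimately show ?thesis
    using assms by (simp add: in_general_position5 d2_def Wset_def)
qed

lemma map_rclass_std_rows_in_Xn4:
  "a dvd 1 \<Longrightarrow> x \<in> Wset \<Longrightarrow> map rclass (std_rows a (x::'a::comm_ring_1)) \<in> Xn 4"
  using in_general_position_std_rows[of a x] map_rclass_in_Xn4 by (simp add: std_rows_def del: list.map)

lemma cls_rows_std: "cls_rows (1, 0) (0, 1) (1, - a) = (a::'a::comm_ring_1)"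
  by (simp add: cls_rows_def d2_def uinv_minus)

lemma cr_rows_std:
  assumes "a dvd 1" "x dvd 1"
  shows "cr_rows (1, 0) (0, 1) (1, - a) (1, - (a * x)) = (x::'a::comm_ring_1)"
proof -
  have "a * x * uinv a = x * (a * uinv a)" by (simp only: mult_ac)
  with assms show ?thesis by (simp add: cr_rows_def d2_def uinv_minus uinv_right)
qed

lemma Phi_Psi_std_rows:
  assumes a: "a dvd 1" and x: "x \<in> Wset"
  shows "Phi (frag_of (map rclass (std_rows a x))) = frag_of (sqclass a, x::'a::comm_ring_1)"
    and "Psi (frag_of (map rclass (std_rows a x))) = frag_of x"
  using in_general_position_std_rows[OF a x] a x unfolding std_rows_def
  by (simp_all add: Phi_Psi_map_rclass cls_rows_std cr_rows_std Wset_def del: list.map)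

lemma rclass_rowmul_cls_rows:
  assumes "d2 u0 u1 dvd 1" "d2 u0 w dvd 1" "d2 u1 w dvd 1"
  shows "rclass (rowmul (1, - cls_rows u0 u1 w) (u0, row_scale (uinv (d2 u0 u1)) u1)) = rclass (w::'a::comm_ring_1 row)"
proof (rule rclass_eq_if_d2_eq_0)
  have "cls_rows u0 u1 w * uinv (d2 u0 u1) * d2 u1 w
      = (d2 u0 w * d2 u0 u1 * d2 u1 w) * uinv (d2 u1 w * d2 u0 u1)"
    using assms by (simp add: cls_rows_def uinv_mult mult_ac)
  also have "\<dots> = d2 u0 w"
    using assms by (simp add: mult_uinv_eq_iff)
  finally show "d2 (rowmul (1, - cls_rows u0 u1 w) (u0, row_scale (uinv (d2 u0 u1)) u1)) w = 0"
    by (simp add: d2_rowmul_1 d2_row_scale_left mult_ac)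
  show "d2 (rowmul (1, - cls_rows u0 u1 w) (u0, row_scale (uinv (d2 u0 u1)) u1)) u0 dvd 1"
    using assms by (simp add: d2_rowmul_1 d2_row_scale_left d2_swap[of u1] cls_rows_def)
  show "d2 w u0 dvd 1" using assms(2) by (simp add: is_unit_d2_swap)
qed

text \<open>The matrix with rows \<open>u0\<close> and \<open>u1 / d2 u0 u1\<close> has determinant 1 and moves the
  standard configuration with the invariants of \<open>[u0, u1, u2, u3]\<close> onto it.\<close>

lemma conf_act_std_rows_cls_rows:
  assumes u: "in_general_position [u0, u1, u2, u3::'a::comm_ring_1 row]"
  defines "M \<equiv> (u0, row_scale (uinv (d2 u0 u1)) u1)"
  shows "mdet M = 1"
    and "conf_act M (frag_of (map rclass (std_rows (cls_rows u0 u1 u2) (cr_rows u0 u1 u2 u3)))) =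
      frag_of (map rclass [u0, u1, u2, u3])"
proof -
  note d = u[unfolded in_general_position4]
  show "mdet M = 1" using d by (simp add: M_def mdet_def d2_row_scale_right uinv_left)
  have "rowmul (1, 0) M = u0" "rowmul (0, 1) M = row_scale (uinv (d2 u0 u1)) u1"
    by (simp_all add: M_def rowmul_def row_scale_def)
  moreover have "rclass (rowmul (1, - cls_rows u0 u1 u2) M) = rclass u2"
    "rclass (rowmul (1, - (cls_rows u0 u1 u2 * cr_rows u0 u1 u2 u3)) M) = rclass u3"
    using d by (simp_all add: M_def rclass_rowmul_cls_rows cls_rows_mult_cr_rows)
  ultimately show "conf_act M (frag_of (map rclass (std_rows (cls_rows u0 u1 u2) (cr_rows u0 u1 u2 u3)))) =
      frag_of (map rclass [u0, u1, u2, u3])"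
    using d unfolding std_rows_def conf_act_map_rclass by (simp add: rclass_row_scale)
qed

lemma mdet_diag: "mdet ((t, 0), (0, r)) = t * (r::'a::comm_ring_1)"
  by (simp add: mdet_def d2_def)

lemma conf_act_diag_std_rows:
  assumes "t dvd 1" "r dvd 1"
  shows "conf_act ((t, 0), (0, r)) (frag_of (map rclass (std_rows b x))) =
    frag_of (map rclass (std_rows (b * r * uinv t) (x::'a::comm_ring_1)))"
proof -
  have "t * (b * r * uinv t) = b * r" using assms(1) by (rule mult_mult_uinv_cancel)
  then have "rowmul (1, 0) ((t, 0), (0, r)) = row_scale t (1, 0)"
    "rowmul (0, 1) ((t, 0), (0, r)) = row_scale r (0, 1)"
    "rowmul (1, - b) ((t, 0), (0, r)) = row_scale t (1, - (b * r * uinv t))"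
    "rowmul (1, - (b * x)) ((t, 0), (0, r)) = row_scale t (1, - (b * r * uinv t * x))"
    by (simp_all add: rowmul_def row_scale_def mult.assoc[symmetric])
  then show ?thesis
    using assms unfolding std_rows_def conf_act_map_rclass by (simp add: rclass_row_scale)
qed

lemma bdry_in_N_coinv: "cs \<in> Xn 5 \<Longrightarrow> bdry cs \<in> N_coinv H"
  unfolding N_coinv_def by (blast intro: gen_base)

lemma conf_act_diff_in_N_coinv:
  "M \<in> H \<Longrightarrow> cs \<in> Xn 4 \<Longrightarrow> conf_act M (frag_of cs) - frag_of cs \<in> N_coinv H"
  unfolding N_coinv_def by (blast intro: gen_base)

lemma N_coinv_diff: "x \<in> N_coinv H \<Longrightarrow> y \<in> N_coinv H \<Longrightarrow> x - y \<in> N_coinv H"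
  unfolding N_coinv_def by (rule gen_diff)

lemma N_coinv_add: "x \<in> N_coinv H \<Longrightarrow> y \<in> N_coinv H \<Longrightarrow> x + y \<in> N_coinv H"
  unfolding N_coinv_def by (rule gen_subgroup_add)

lemma N_coinv_mono: "H \<subseteq> H' \<Longrightarrow> N_coinv H \<subseteq> N_coinv H'"
  unfolding N_coinv_def by (rule gen_subgroup_mono) blast

lemma SL2_subset_GL2: "SL2 \<subseteq> GL2"
  by (auto simp: SL2_def GL2_def)

lemma Phi_Psi_bdry_in_N:
  assumes "cs \<in> Xn 5"
  shows "Phi (bdry cs) \<in> N_RP" and "Psi (bdry cs) \<in> N_P"
proof -
  obtain u0 u1 u2 u3 u4 where cs: "cs = map rclass [u0, u1, u2, u3, u4]"
    and u: "in_general_position [u0, u1, u2, u3, u4::'a::comm_ring_1 row]"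
    using assms unfolding Xn5_iff by blast
  show "Phi (bdry cs) \<in> N_RP" "Psi (bdry cs) \<in> N_P"
    unfolding cs Phi_bdry[OF u] Psi_bdry[OF u] N_RP_def N_P_def
    using rel_parameters_bdry[OF u] by (blast intro: gen_base)+
qed

lemma bdry_in_free_ab:
  assumes "in_general_position [u0, u1, u2, u3, u4::'a::comm_ring_1 row]"
  shows "bdry (map rclass [u0, u1, u2, u3, u4]) \<in> free_ab (Xn 4)"
  unfolding bdry_map_rclass
  by (intro add_in_free_ab diff_in_free_ab frag_of_in_free_ab map_rclass_in_Xn4
      in_general_position_faces[OF assms])

lemma Phi_image_N_coinv_SL2: "Phi ` N_coinv SL2 \<subseteq> (N_RP :: ('a::comm_ring_1 set \<times> 'a \<Rightarrow>\<^sub>0 int) set)"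
  unfolding N_coinv_def N_RP_def
  by (rule additive_image_gen_subgroup[of Phi, OF Phi_diff], rule image_subsetI,
      elim UnE imageE CollectE exE conjE)
    (simp_all add: Phi_Psi_bdry_in_N(1)[unfolded N_RP_def] Phi_diff Phi_Psi_conf_act(1) SL2_def RP_act_1 gen_zero)

lemma Psi_image_N_coinv_GL2: "Psi ` N_coinv GL2 \<subseteq> (N_P :: ('a::comm_ring_1 \<Rightarrow>\<^sub>0 int) set)"
  unfolding N_coinv_def N_P_def
  by (rule additive_image_gen_subgroup[of Psi, OF Psi_diff], rule image_subsetI,
      elim UnE imageE CollectE exE conjE)
    (simp_all add: Phi_Psi_bdry_in_N(2)[unfolded N_P_def] Psi_diff Phi_Psi_conf_act(2) GL2_def gen_zero)

lemma std_rows_diag_diff_in_N_coinv: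
  assumes "t dvd 1" "r dvd 1" "((t, 0), (0, r)) \<in> H" "b dvd 1" "x \<in> Wset"
  shows "frag_of (map rclass (std_rows (b * r * uinv t) x)) - frag_of (map rclass (std_rows b (x::'a::comm_ring_1)))
    \<in> N_coinv H"
  using conf_act_diff_in_N_coinv[OF assms(3) map_rclass_std_rows_in_Xn4[OF assms(4,5)]]
  by (simp add: conf_act_diag_std_rows assms(1,2))

section \<open>Lifting along \<open>Phi\<close> and \<open>Psi\<close>\<close>

definition std_lift_RP :: "('a::comm_ring_1 set \<times> 'a \<Rightarrow>\<^sub>0 int) \<Rightarrow> ('a row set list \<Rightarrow>\<^sub>0 int)" where
  "std_lift_RP = frag_extend (\<lambda>(g, x). frag_of (map rclass (std_rows (sqrep g) x)))"

definition std_lift_P :: "('a::comm_ring_1 \<Rightarrow>\<^sub>0 int) \<Rightarrow> ('a row set list \<Rightarrow>\<^sub>0 int)" where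
  "std_lift_P = frag_extend (\<lambda>x. frag_of (map rclass (std_rows 1 x)))"

lemma std_lift_RP_diff: "std_lift_RP (a - b) = std_lift_RP a - std_lift_RP b"
  by (simp add: std_lift_RP_def frag_extend_diff)

lemma std_lift_P_diff: "std_lift_P (a - b) = std_lift_P a - std_lift_P b"
  by (simp add: std_lift_P_def frag_extend_diff)

lemma frag_of_minus_std_rows_in_N_coinv:
  assumes u: "in_general_position [u0, u1, u2, u3::'a::comm_ring_1 row]"
  shows "frag_of (map rclass [u0, u1, u2, u3])
    - frag_of (map rclass (std_rows (cls_rows u0 u1 u2) (cr_rows u0 u1 u2 u3))) \<in> N_coinv SL2"
proof -
  have "cls_rows u0 u1 u2 dvd 1" "cr_rows u0 u1 u2 u3 \<in> Wset"
    using u by (simp_all add: cls_rows_def in_general_position4 cr_rows_in_Wset)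
  note std = map_rclass_std_rows_in_Xn4[OF this]
  have "(u0, row_scale (uinv (d2 u0 u1)) u1) \<in> SL2"
    using conf_act_std_rows_cls_rows(1)[OF u] by (simp add: SL2_def)
  from conf_act_diff_in_N_coinv[OF this std] show ?thesis
    by (simp add: conf_act_std_rows_cls_rows(2)[OF u] del: list.map)
qed

lemma frag_of_minus_std_lift_in_N_coinv:
  assumes "cs \<in> Xn 4"
  shows "frag_of cs - std_lift_RP (Phi (frag_of cs)) \<in> N_coinv SL2"
    and "frag_of cs - std_lift_P (Psi (frag_of cs)) \<in> N_coinv (GL2::'a::comm_ring_1 mat2 set)"
proof -
  obtain u0 u1 u2 u3 where cs: "cs = map rclass [u0, u1, u2, u3]"
    and u: "in_general_position [u0, u1, u2, u3::'a row]"
    using assms unfolding Xn4_iff by blast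
  define b where "b = cls_rows u0 u1 u2"
  define x where "x = cr_rows u0 u1 u2 u3"
  have b: "b dvd 1" and x: "x \<in> Wset"
    using u by (simp_all add: b_def cls_rows_def in_general_position4 x_def cr_rows_in_Wset)
  have to_std: "frag_of cs - frag_of (map rclass (std_rows b x)) \<in> N_coinv SL2"
    using frag_of_minus_std_rows_in_N_coinv[OF u] by (simp add: cs b_def x_def)
  define a where "a = sqrep (sqclass b)"
  have a: "a dvd 1" "sqclass a = sqclass b" using sqrep_sqclass[OF b] by (simp_all add: a_def)
  then obtain s where s: "s dvd 1" "b = a * s * s" using sqclass_eqD by blast
  have "frag_of (map rclass (std_rows b x)) - frag_of (map rclass (std_rows a x)) \<in> N_coinv SL2"
    using std_rows_diag_diff_in_N_coinv[of "uinv s" s SL2 a x] s a(1) x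
    by (simp add: SL2_def mdet_diag uinv_left)
  moreover have "std_lift_RP (Phi (frag_of cs)) = frag_of (map rclass (std_rows a x))"
    unfolding cs Phi_Psi_map_rclass(1)[OF u] by (simp add: std_lift_RP_def a_def b_def x_def)
  ultimately show "frag_of cs - std_lift_RP (Phi (frag_of cs)) \<in> N_coinv SL2"
    using N_coinv_add[OF to_std] by fastforce
  have "frag_of (map rclass (std_rows b x)) - frag_of (map rclass (std_rows 1 x)) \<in> N_coinv GL2"
    using std_rows_diag_diff_in_N_coinv[of 1 b GL2 1 x] b x by (simp add: GL2_def mdet_diag)
  moreover have "std_lift_P (Psi (frag_of cs)) = frag_of (map rclass (std_rows 1 x))"
    unfolding cs Phi_Psi_map_rclass(2)[OF u] by (simp add: std_lift_P_def x_def)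
  ultimately show "frag_of cs - std_lift_P (Psi (frag_of cs)) \<in> N_coinv GL2"
    using N_coinv_add[OF to_std[THEN N_coinv_mono[OF SL2_subset_GL2, THEN subsetD]]] by fastforce
qed

lemma diff_std_lift_in_N_coinv:
  assumes "z \<in> free_ab (Xn 4)"
  shows "z - std_lift_RP (Phi z) \<in> N_coinv SL2"
    and "z - std_lift_P (Psi z) \<in> N_coinv (GL2::'a::comm_ring_1 mat2 set)"
  using assms frag_of_minus_std_lift_in_N_coinv[unfolded N_coinv_def Phi_def Psi_def]
  unfolding N_coinv_def Phi_def Psi_def std_lift_RP_def std_lift_P_def
  by (auto intro!: diff_frag_extend_frag_extend_in_gen_subgroup)

text \<open>A relator is the image of the boundary of a standard configuration of five rows, and the
  lift of that image differs from the boundary by an element of the kernel.\<close>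

lemma std_lift_rel_in_N_coinv:
  assumes g: "g dvd 1" and xy: "x \<in> Wset" "y \<in> Wset" "y * uinv x \<in> Wset"
  shows "std_lift_RP (rel_RP g x y) \<in> N_coinv SL2"
    and "std_lift_P (rel_P x y) \<in> N_coinv (GL2::'a::comm_ring_1 mat2 set)"
proof -
  have lift_bdry: "std_lift_RP (Phi (bdry cs)) \<in> N_coinv SL2"
    "std_lift_P (Psi (bdry cs)) \<in> N_coinv (GL2::'a mat2 set)"
    if "cs \<in> Xn 5" "bdry cs \<in> free_ab (Xn 4)" for cs :: "'a row set list"
    using N_coinv_diff[OF bdry_in_N_coinv[OF that(1)] diff_std_lift_in_N_coinv(1)[OF that(2)]]
      N_coinv_diff[OF bdry_in_N_coinv[OF that(1)] diff_std_lift_in_N_coinv(2)[OF that(2)]]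
    by simp_all
  define vs :: "'a row list" where "vs = [(1, 0), (0, 1), (1, - g), (1, - (g * x)), (1, - (g * y))]"
  define ws :: "'a row list" where "ws = [(1, 0), (0, 1), (1, - 1), (1, - (1 * x)), (1, - (1 * y))]"
  have v: "in_general_position vs" "in_general_position ws"
    using in_general_position_std_rows5[OF g xy] in_general_position_std_rows5[OF _ xy, of 1]
    by (simp_all add: vs_def ws_def del: mult_1)
  have "x dvd 1" "y dvd 1" using xy by (simp_all add: Wset_def)
  then have "Phi (bdry (map rclass vs)) = rel_RP g x y" "Psi (bdry (map rclass ws)) = rel_P x y"
    unfolding vs_def ws_def Phi_bdry[OF v(1)[unfolded vs_def]] Psi_bdry[OF v(2)[unfolded ws_def]]
    using g by (simp_all add: cls_rows_std cr_rows_std del: mult_1)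
  then show "std_lift_RP (rel_RP g x y) \<in> N_coinv SL2" "std_lift_P (rel_P x y) \<in> N_coinv GL2"
    using lift_bdry map_rclass_in_Xn5 bdry_in_free_ab v unfolding vs_def ws_def by metis+
qed

lemma std_lift_RP_image_N_RP: "std_lift_RP ` N_RP \<subseteq> (N_coinv SL2 :: ('a::comm_ring_1 row set list \<Rightarrow>\<^sub>0 int) set)"
  unfolding N_RP_def N_coinv_def
  by (rule additive_image_gen_subgroup[of std_lift_RP, OF std_lift_RP_diff], rule image_subsetI,
      elim CollectE exE conjE, hypsubst, rule std_lift_rel_in_N_coinv(1)[unfolded N_coinv_def])

lemma std_lift_P_image_N_P: "std_lift_P ` N_P \<subseteq> (N_coinv GL2 :: ('a::comm_ring_1 row set list \<Rightarrow>\<^sub>0 int) set)"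
  unfolding N_P_def N_coinv_def
  by (rule additive_image_gen_subgroup[of std_lift_P, OF std_lift_P_diff], rule image_subsetI,
      elim CollectE exE conjE, hypsubst, rule std_lift_rel_in_N_coinv(2)[OF one_dvd, unfolded N_coinv_def])

lemma mem_N_coinv_iff:
  assumes "z \<in> free_ab (Xn 4 :: 'a::comm_ring_1 row set list set)"
  shows "z \<in> N_coinv SL2 \<longleftrightarrow> Phi z \<in> N_RP"
    and "z \<in> N_coinv GL2 \<longleftrightarrow> Psi z \<in> N_P"
proof -
  show "z \<in> N_coinv SL2 \<longleftrightarrow> Phi z \<in> N_RP"
  proof
    assume "Phi z \<in> N_RP"
    then have "std_lift_RP (Phi z) \<in> N_coinv SL2" using std_lift_RP_image_N_RP by blast
    from N_coinv_add[OF diff_std_lift_in_N_coinv(1)[OF assms] this] show "z \<in> N_coinv SL2" by simp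
  qed (use Phi_image_N_coinv_SL2 in blast)
  show "z \<in> N_coinv GL2 \<longleftrightarrow> Psi z \<in> N_P"
  proof
    assume "Psi z \<in> N_P"
    then have "std_lift_P (Psi z) \<in> N_coinv GL2" using std_lift_P_image_N_P by blast
    from N_coinv_add[OF diff_std_lift_in_N_coinv(2)[OF assms] this] show "z \<in> N_coinv GL2" by simp
  qed (use Psi_image_N_coinv_GL2 in blast)
qed

lemma std_lift_RP_frag_of:
  assumes "p \<in> G_A \<times> Wset"
  shows "Phi (std_lift_RP (frag_of p)) = frag_of (p :: 'a::comm_ring_1 set \<times> 'a)"
    and "std_lift_RP (frag_of p) \<in> free_ab (Xn 4)"
proof -
  obtain c x where "c dvd 1" "p = (sqclass c, x)" "x \<in> Wset" using assms by (auto simp: mem_G_A)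
  then show "Phi (std_lift_RP (frag_of p)) = frag_of p" "std_lift_RP (frag_of p) \<in> free_ab (Xn 4)"
    using sqrep_sqclass[of c]
    by (simp_all add: std_lift_RP_def Phi_Psi_std_rows frag_of_in_free_ab map_rclass_std_rows_in_Xn4)
qed

lemma Phi_std_lift_RP:
  assumes "w \<in> free_ab (G_A \<times> Wset)"
  shows "Phi (std_lift_RP w) = (w :: ('a::comm_ring_1 set \<times> 'a) \<Rightarrow>\<^sub>0 int)"
    and "std_lift_RP w \<in> free_ab (Xn 4)"
proof -
  show "Phi (std_lift_RP w) = w"
    using assms by (rule additive_eq_on_free_ab[where F = "\<lambda>w. Phi (std_lift_RP w)" and G = "\<lambda>w. w"])
      (simp_all add: Phi_diff std_lift_RP_diff std_lift_RP_frag_of)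
  show "std_lift_RP w \<in> free_ab (Xn 4)"
    unfolding std_lift_RP_def
    by (rule frag_extend_in_free_ab[OF assms]) (use std_lift_RP_frag_of(2) in \<open>simp add: std_lift_RP_def\<close>)
qed

lemma std_lift_P_frag_of: "std_lift_P (frag_of x) = frag_of (map rclass (std_rows 1 x))"
  by (simp add: std_lift_P_def)

lemma Psi_std_lift_P:
  assumes "v \<in> free_ab Wset"
  shows "Psi (std_lift_P v) = (v :: 'a::comm_ring_1 \<Rightarrow>\<^sub>0 int)"
    and "std_lift_P v \<in> free_ab (Xn 4)"
proof -
  show "Psi (std_lift_P v) = v"
    using assms by (rule additive_eq_on_free_ab[where F = "\<lambda>v. Psi (std_lift_P v)" and G = "\<lambda>v. v"])
      (simp_all add: Psi_diff std_lift_P_diff std_lift_P_frag_of Phi_Psi_std_rows)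
  show "std_lift_P v \<in> free_ab (Xn 4)"
    unfolding std_lift_P_def
    by (rule frag_extend_in_free_ab[OF assms]) (simp add: frag_of_in_free_ab map_rclass_std_rows_in_Xn4)
qed

theorem mainTheorem14:
  assumes "infinite (UNIV :: 'a::comm_ring_1 set) \<or> card (UNIV :: 'a set) \<ge> 4"
  shows
    "(\<forall>z \<in> free_ab (Xn 4 :: 'a row set list set).
        z \<in> N_coinv SL2 \<longleftrightarrow> Phi z \<in> N_RP)
   \<and> (\<forall>w \<in> free_ab (G_A \<times> (Wset :: 'a set)).
        \<exists>z \<in> free_ab (Xn 4). w - Phi z \<in> N_RP)
   \<and> (\<forall>M \<in> (GL2 :: 'a mat2 set). \<forall>z \<in> free_ab (Xn 4).
        Phi (conf_act M z) - RP_act (mdet M) (Phi z) \<in> N_RP)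
   \<and> (\<forall>z \<in> free_ab (Xn 4 :: 'a row set list set).
        z \<in> N_coinv GL2 \<longleftrightarrow> Psi z \<in> N_P)
   \<and> (\<forall>w \<in> free_ab (Wset :: 'a set).
        \<exists>z \<in> free_ab (Xn 4). w - Psi z \<in> N_P)"
proof (intro conjI ballI)
  fix w :: "('a set \<times> 'a) \<Rightarrow>\<^sub>0 int" assume "w \<in> free_ab (G_A \<times> Wset)"
  then show "\<exists>z \<in> free_ab (Xn 4). w - Phi z \<in> N_RP"
    by (intro bexI[of _ "std_lift_RP w"]) (simp_all add: Phi_std_lift_RP N_RP_def gen_zero)
next
  fix v :: "'a \<Rightarrow>\<^sub>0 int" assume "v \<in> free_ab Wset"
  then show "\<exists>z \<in> free_ab (Xn 4). v - Psi z \<in> N_P"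
    by (intro bexI[of _ "std_lift_P v"]) (simp_all add: Psi_std_lift_P N_P_def gen_zero)
next
  fix M :: "'a mat2" and z :: "'a row set list \<Rightarrow>\<^sub>0 int" assume "M \<in> GL2" "z \<in> free_ab (Xn 4)"
  then show "Phi (conf_act M z) - RP_act (mdet M) (Phi z) \<in> N_RP"
    by (simp add: Phi_conf_act N_RP_def gen_zero)
qed (simp_all add: mem_N_coinv_iff)

end
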